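(* Let $D=(V,A)$ be a digraph with minimum in-degree at least 1, and let $\mathcal{L}D=\mathcal{L}_{(A',\phi)}D$ be a partial line digraph of $D$. Then the Fibonacci number of $D$ is less than or equal to the Fibonacci number of $\mathcal{L}D$.
   Context: Digraphs are loopless and without multiple arcs. For a vertex $j$, $\omega^-(j)$ is the set of arcs with terminal vertex $j$; for a set of arcs $\Omega$, $H(\Omega)=\{y:(x,y)\in\Omega\}$. The arc $(x,y)$ is also written $xy$. Partial line digraph: given $D=(V,A)$ with minimum in-degree at least 1, take an arc subset $A'\subseteq A$ and a surjective map $\phi:A\to A'$ such that (i) $H(A')=V$; (ii) $\phi$ restricted to $A'$ is the identity, and for every vertex $j\in V$, $\phi(\omega^-(j))\subseteq\omega^-(j)\cap A'$. The partial line digraph $\mathcal{L}_{(A',\phi)}D$ has vertex set $A'$ and arc set $\{(ij,\phi(j,k)) : ij\in A',\ (j,k)\in A\}$. A set of vertices is independent if no arc joins two of its vertices (equivalently $d(u,v)\ge 2$ for all distinct $u,v$ in it, where $d$ is directed distance). The Fibonacci number of a digraph is the number of its independent vertex sets, including the empty set. *)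

theory Defs
  imports Main
begin

definition digraph :: "'a set \<Rightarrow> ('a \<times> 'a) set \<Rightarrow> bool" where
  "digraph V A \<longleftrightarrow> finite V \<and> A \<subseteq> V \<times> V \<and> (\<forall>x. (x, x) \<notin> A)"

definition min_indeg_ge1 :: "'a set \<Rightarrow> ('a \<times> 'a) set \<Rightarrow> bool" where
  "min_indeg_ge1 V A \<longleftrightarrow> (\<forall>j\<in>V. \<exists>i. (i, j) \<in> A)"

definition in_arcs :: "('a \<times> 'a) set \<Rightarrow> 'a \<Rightarrow> ('a \<times> 'a) set" where
  "in_arcs A j = {a \<in> A. snd a = j}"

definition heads :: "('a \<times> 'a) set \<Rightarrow> 'a set" where
  "heads \<Omega> = {y. \<exists>x. (x, y) \<in> \<Omega>}"

definition pld_data :: "'a set \<Rightarrow> ('a \<times> 'a) set \<Rightarrow> ('a \<times> 'a) set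
    \<Rightarrow> ('a \<times> 'a \<Rightarrow> 'a \<times> 'a) \<Rightarrow> bool" where
  "pld_data V A A' \<phi> \<longleftrightarrow>
     A' \<subseteq> A \<and> \<phi> ` A = A' \<and> heads A' = V \<and>
     (\<forall>a\<in>A'. \<phi> a = a) \<and>
     (\<forall>j\<in>V. \<phi> ` in_arcs A j \<subseteq> in_arcs A j \<inter> A')"

text \<open>Arc set of the partial line digraph (vertex set is A').\<close>
definition pld_arcs :: "('a \<times> 'a) set \<Rightarrow> ('a \<times> 'a) set \<Rightarrow> ('a \<times> 'a \<Rightarrow> 'a \<times> 'a)
    \<Rightarrow> (('a \<times> 'a) \<times> ('a \<times> 'a)) set" where
  "pld_arcs A A' \<phi> = {((i, j), \<phi> (j', k)) | i j j' k. (i, j) \<in> A' \<and> (j', k) \<in> A \<and> j' = j}"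

definition independent :: "('b \<times> 'b) set \<Rightarrow> 'b set \<Rightarrow> bool" where
  "independent E S \<longleftrightarrow> (\<forall>u\<in>S. \<forall>v\<in>S. (u, v) \<notin> E)"

definition fibonacci_number :: "'b set \<Rightarrow> ('b \<times> 'b) set \<Rightarrow> nat" where
  "fibonacci_number W E = card {S. S \<subseteq> W \<and> independent E S}"

end

theory Submission
  imports Defs
begin

text \<open>Taking heads maps each arc of the partial line digraph \<open>LD\<close> to an arc of \<open>D\<close>, and every
  vertex of \<open>D\<close> is the head of some arc in \<open>A'\<close>. Pulling an independent set \<open>S\<close> of \<open>D\<close>
  back along this surjective homomorphism gives an independent set of \<open>LD\<close>, and distinct
  \<open>S\<close> give distinct preimages.\<close>

lemma independent_vimage_hom:
  assumes "\<And>u w. (u, w) \<in> E \<Longrightarrow> (h u, h w) \<in> F"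
    and "independent F S"
  shows "independent E (W \<inter> h -` S)"
  using assms unfolding independent_def by blast

lemma inj_on_vimage_Pow_image:
  "inj_on (\<lambda>S. W \<inter> h -` S) (Pow (h ` W))"
  by (rule inj_onI) blast

lemma fibonacci_number_le_of_surj_hom:
  assumes "finite W"
    and "V \<subseteq> h ` W"
    and "\<And>u w. (u, w) \<in> E \<Longrightarrow> (h u, h w) \<in> F"
  shows "fibonacci_number V F \<le> fibonacci_number W E"
proof -
  let ?pullback = "\<lambda>S. W \<inter> h -` S"
  have "inj_on ?pullback {S. S \<subseteq> V \<and> independent F S}"
    by (rule inj_on_subset[OF inj_on_vimage_Pow_image]) (use assms(2) in auto)
  moreover have "?pullback ` {S. S \<subseteq> V \<and> independent F S} \<subseteq> {T. T \<subseteq> W \<and> independent E T}"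
    using independent_vimage_hom[OF assms(3)] by auto
  moreover have "finite {T. T \<subseteq> W \<and> independent E T}"
    using assms(1) by simp
  ultimately show ?thesis
    unfolding fibonacci_number_def by (rule card_inj_on_le)
qed

lemma heads_eq_snd_image: "heads \<Omega> = snd ` \<Omega>"
  unfolding heads_def by force

lemma pld_arcs_snd_hom:
  assumes "A \<subseteq> V \<times> V"
    and "pld_data V A A' \<phi>"
    and "(u, w) \<in> pld_arcs A A' \<phi>"
  shows "(snd u, snd w) \<in> A"
proof -
  obtain i j k where u: "u = (i, j)" and w: "w = \<phi> (j, k)" and jk: "(j, k) \<in> A"
    using assms(3) unfolding pld_arcs_def by blast
  have "(j, k) \<in> in_arcs A k" and "k \<in> V"
    using jk assms(1) by (auto simp: in_arcs_def)
  then have "\<phi> (j, k) \<in> in_arcs A k"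
    using assms(2) unfolding pld_data_def by blast
  then show ?thesis
    using u w jk by (simp add: in_arcs_def)
qed

theorem corollary2p2:
  fixes V :: "'a set" and A A' :: "('a \<times> 'a) set" and \<phi> :: "'a \<times> 'a \<Rightarrow> 'a \<times> 'a"
  assumes "digraph V A"
    and "min_indeg_ge1 V A"
    and "pld_data V A A' \<phi>"
  shows "fibonacci_number V A \<le> fibonacci_number A' (pld_arcs A A' \<phi>)"
proof (rule fibonacci_number_le_of_surj_hom)
  have "finite V" and A_sub: "A \<subseteq> V \<times> V"
    using assms(1) by (auto simp: digraph_def)
  moreover have "A' \<subseteq> A" and "heads A' = V"
    using assms(3) by (auto simp: pld_data_def)
  ultimately show "finite A'"
    by (meson finite_SigmaI finite_subset)
  show "V \<subseteq> snd ` A'"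
    using \<open>heads A' = V\<close> by (simp add: heads_eq_snd_image)
  show "(snd u, snd w) \<in> A" if "(u, w) \<in> pld_arcs A A' \<phi>" for u w
    using pld_arcs_snd_hom[OF A_sub assms(3) that] .
qed

end
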